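(* For $p,q\ge 0$ let $K_{p,q}$ be the complete bipartite graph with parts of sizes $p$ and $q$. Then $$\sum_{p\ge0}\sum_{q\ge0}\mathrm{sa}(K_{p,q};t)\,\frac{x^p}{p!}\frac{y^q}{q!} = e^{t(x+y)}\,\frac{\cosh x+\cosh y-1}{\cosh(x+y)}.$$
   Context: All graphs are finite, simple and undirected. For a graph $G=(V,E)$ and $V'\subseteq V$, $G|_{V'}$ denotes the induced subgraph on $V'$. The signed a-number $\mathrm{sa}(G)$ is defined recursively: $\mathrm{sa}(G)=1$ if $G$ is the empty graph (no vertices); $\mathrm{sa}(G)=0$ if $G$ has a connected component with an odd number of vertices; otherwise $\mathrm{sa}(G)=-\sum_{V'\subsetneq V}\mathrm{sa}(G|_{V'})$. The signed a-polynomial of $G$ is $\mathrm{sa}(G;t)=\sum_{V'\subseteq V}\mathrm{sa}(G|_{V'})\,t^{|V\setminus V'|}$. *)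

theory Defs
  imports "HOL-Analysis.Analysis" "HOL-Computational_Algebra.Polynomial"
begin

text \<open>A finite simple graph is given by a vertex set V and a symmetric irreflexive
adjacency relation E.  The induced subgraph on W \<subseteq> V is (W, E) (E restricted to W).\<close>

definition simple_graph :: "'a set \<Rightarrow> ('a \<Rightarrow> 'a \<Rightarrow> bool) \<Rightarrow> bool" where
  "simple_graph V E \<longleftrightarrow> finite V \<and> (\<forall>u v. E u v \<longrightarrow> E v u) \<and> (\<forall>v. \<not> E v v)"

definition adj_in :: "('a \<Rightarrow> 'a \<Rightarrow> bool) \<Rightarrow> 'a set \<Rightarrow> 'a \<Rightarrow> 'a \<Rightarrow> bool" where
  "adj_in E V u v \<longleftrightarrow> u \<in> V \<and> v \<in> V \<and> E u v"

definition component :: "('a \<Rightarrow> 'a \<Rightarrow> bool) \<Rightarrow> 'a set \<Rightarrow> 'a \<Rightarrow> 'a set" where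
  "component E V v = {u \<in> V. (adj_in E V)\<^sup>*\<^sup>* v u}"

definition has_odd_component :: "('a \<Rightarrow> 'a \<Rightarrow> bool) \<Rightarrow> 'a set \<Rightarrow> bool" where
  "has_odd_component E V \<longleftrightarrow> (\<exists>v\<in>V. odd (card (component E V v)))"

function sa :: "('a \<Rightarrow> 'a \<Rightarrow> bool) \<Rightarrow> 'a set \<Rightarrow> int" where
  "sa E V = (if \<not> finite V \<or> V = {} then 1
             else if has_odd_component E V then 0
             else - (\<Sum>W \<in> {W. W \<subset> V}. sa E W))"
  by auto
termination
  by (relation "{((E, W), (E', V)). W \<subset> V \<and> finite V}")
     (auto intro: wf_subset[OF wf_finite_psubset[THEN wf_inv_image[of _ snd]]]
           simp: finite_psubset_def inv_image_def)

definition sa_poly :: "('a \<Rightarrow> 'a \<Rightarrow> bool) \<Rightarrow> 'a set \<Rightarrow> int poly" where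
  "sa_poly E V = (\<Sum>W \<in> Pow V. monom (sa E W) (card (V - W)))"

definition Kbip_V :: "nat \<Rightarrow> nat \<Rightarrow> (nat + nat) set" where
  "Kbip_V p q = Inl ` {..<p} \<union> Inr ` {..<q}"

definition Kbip_E :: "(nat + nat) \<Rightarrow> (nat + nat) \<Rightarrow> bool" where
  "Kbip_E u v \<longleftrightarrow> (isl u \<and> \<not> isl v) \<or> (\<not> isl u \<and> isl v)"

end

(*
  Every induced subgraph of K_{p,q} is again complete bipartite, and it is some K_{i,j} in exactly
  C(p,i) C(q,j) ways.  Hence sa(K_{p,q}) = s(p,q) for the array s obeying the recursion of sa:
  s(0,0) = 1, s(p,q) = 0 if p = 0 or q = 0 (isolated vertices) or p + q is odd, and otherwise
  the binomially weighted sum of s over the rectangle {..p} x {..q} vanishes.  As s(i,j) = 0 for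
  odd i + j, this says that the binomial convolution of s with the parity indicator of i + j
  (the coefficients of cosh(x + y)) is the coefficient array of cosh x + cosh y - 1; in terms of
  exponential generating functions S(x,y) cosh(x + y) = cosh x + cosh y - 1.  Finally sa(K_{p,q};t)
  is the binomial convolution of s with t^(i+j), whose generating function is e^(t(x+y)).
  The bound |s(i,j)| <= 4^(i+j) i! j! makes all series absolutely convergent for |x|, |y| < 1/8.
*)

theory Submission
  imports Defs
begin

section \<open>Subsets of a disjoint union\<close>

lemma sum_Pow_card:
  fixes f :: "nat \<Rightarrow> 'b::comm_semiring_1"
  assumes "finite A"
  shows "(\<Sum>X\<in>Pow A. f (card X)) = (\<Sum>k\<le>card A. of_nat (card A choose k) * f k)"
proof -
  have "(\<Sum>X\<in>Pow A. f (card X)) = (\<Sum>k\<le>card A. \<Sum>X\<in>{X \<in> Pow A. card X = k}. f (card X))"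
    by (rule sum.group[symmetric]) (use assms in \<open>auto simp: card_mono\<close>)
  also have "\<dots> = (\<Sum>k\<le>card A. of_nat (card A choose k) * f k)"
    by (rule sum.cong) (simp_all add: n_subsets[OF assms])
  finally show ?thesis .
qed

lemma Plus_vimage_Inl_Inr: "Inl -` W <+> Inr -` W = W"
proof (rule set_eqI)
  show "x \<in> Inl -` W <+> Inr -` W \<longleftrightarrow> x \<in> W" for x
    by (cases x) auto
qed

lemma vimage_Inl_Plus [simp]: "Inl -` (A <+> B) = A"
  and vimage_Inr_Plus [simp]: "Inr -` (A <+> B) = B"
  by auto

lemma Plus_subset_Plus_iff: "A' <+> B' \<subseteq> A <+> B \<longleftrightarrow> A' \<subseteq> A \<and> B' \<subseteq> B"
  by blast

lemma inj_Plus: "inj (\<lambda>(X, Y). X <+> Y)"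
  by (rule injI) (metis case_prod_beta prod.expand vimage_Inl_Plus vimage_Inr_Plus)

lemma Pow_Plus: "Pow (A <+> B) = (\<lambda>(X, Y). X <+> Y) ` (Pow A \<times> Pow B)"
proof (intro equalityI subsetI)
  fix W assume "W \<in> Pow (A <+> B)"
  then show "W \<in> (\<lambda>(X, Y). X <+> Y) ` (Pow A \<times> Pow B)"
    by (intro image_eqI[of _ _ "(Inl -` W, Inr -` W)"]) (auto simp: Plus_vimage_Inl_Inr)
qed auto

lemma sum_Pow_Plus_card:
  fixes f :: "nat \<Rightarrow> nat \<Rightarrow> 'b::comm_semiring_1"
  assumes "finite A" "finite B"
  shows "(\<Sum>W\<in>Pow (A <+> B). f (card (Inl -` W)) (card (Inr -` W))) =
    (\<Sum>(i, j)\<in>{..card A} \<times> {..card B}. of_nat (card A choose i) * of_nat (card B choose j) * f i j)"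
proof -
  have "(\<Sum>W\<in>Pow (A <+> B). f (card (Inl -` W)) (card (Inr -` W))) =
      (\<Sum>X\<in>Pow A. \<Sum>Y\<in>Pow B. f (card X) (card Y))"
    unfolding Pow_Plus
    by (subst sum.reindex[OF inj_on_subset[OF inj_Plus subset_UNIV]])
      (simp add: sum.cartesian_product case_prod_unfold)
  also have "\<dots> = (\<Sum>X\<in>Pow A. \<Sum>j\<le>card B. of_nat (card B choose j) * f (card X) j)"
    by (intro sum.cong refl sum_Pow_card[OF assms(2)])
  also have "\<dots> = (\<Sum>j\<le>card B. of_nat (card B choose j) * (\<Sum>X\<in>Pow A. f (card X) j))"
    by (subst sum.swap) (simp add: sum_distrib_left)
  also have "\<dots> = (\<Sum>j\<le>card B. \<Sum>i\<le>card A. of_nat (card A choose i) * of_nat (card B choose j) * f i j)"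
    by (simp add: sum_Pow_card[OF assms(1), of "\<lambda>i. f i _"] sum_distrib_left mult_ac)
  also have "\<dots> = (\<Sum>(i, j)\<in>{..card A} \<times> {..card B}.
      of_nat (card A choose i) * of_nat (card B choose j) * f i j)"
    unfolding sum.cartesian_product[symmetric] by (rule sum.swap)
  finally show ?thesis .
qed

section \<open>The signed a-number of complete bipartite graphs\<close>

function sa_bip :: "nat \<Rightarrow> nat \<Rightarrow> int" where
  "sa_bip a b = (if a = 0 \<and> b = 0 then 1 else if a = 0 \<or> b = 0 \<or> odd (a + b) then 0
     else - (\<Sum>(i, j)\<in>{..a} \<times> {..b} - {(a, b)}. int (a choose i) * int (b choose j) * sa_bip i j))"
  by auto
termination
  by (relation "Wellfounded.measure (\<lambda>(a, b). a + b)") auto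

declare sa_bip.simps [simp del] sa.simps [simp del]

lemma sa_bip_0_0 [simp]: "sa_bip 0 0 = 1"
  by (simp add: sa_bip.simps)

lemma sa_bip_eq_0: "(a, b) \<noteq> (0, 0) \<Longrightarrow> a = 0 \<or> b = 0 \<or> odd (a + b) \<Longrightarrow> sa_bip a b = 0"
  by (subst sa_bip.simps) auto

lemma sum_binomial_sa_bip:
  assumes "even (a + b)"
  shows "(\<Sum>(i, j)\<in>{..a} \<times> {..b}. int (a choose i) * int (b choose j) * sa_bip i j) =
    (if a = 0 \<or> b = 0 then 1 else 0)"
proof (cases "a = 0 \<or> b = 0")
  case True
  have zero: "sa_bip i j = 0" if "i \<le> a" "j \<le> b" "(i, j) \<noteq> (0, 0)" for i j
    using that True by (intro sa_bip_eq_0) auto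
  have "(\<Sum>(i, j)\<in>{..a} \<times> {..b}. int (a choose i) * int (b choose j) * sa_bip i j) =
      (\<Sum>(i, j)\<in>{(0, 0)}. int (a choose i) * int (b choose j) * sa_bip i j)"
    by (intro sum.mono_neutral_right) (use zero in force)+
  then show ?thesis
    using True by simp
next
  case False
  have "(\<Sum>(i, j)\<in>{..a} \<times> {..b}. int (a choose i) * int (b choose j) * sa_bip i j) =
      sa_bip a b + (\<Sum>(i, j)\<in>{..a} \<times> {..b} - {(a, b)}. int (a choose i) * int (b choose j) * sa_bip i j)"
    by (subst sum.remove[of _ "(a, b)"]) auto
  also have "sa_bip a b =
      - (\<Sum>(i, j)\<in>{..a} \<times> {..b} - {(a, b)}. int (a choose i) * int (b choose j) * sa_bip i j)"
    using assms False by (subst sa_bip.simps) simp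
  finally show ?thesis
    using False by simp
qed

lemma component_Kbip_E_Plus:
  assumes "A \<noteq> {}" "B \<noteq> {}" "v \<in> A <+> B"
  shows "component Kbip_E (A <+> B) v = A <+> B"
proof -
  obtain a b where ab: "a \<in> A" "b \<in> B"
    using assms by blast
  let ?R = "adj_in Kbip_E (A <+> B)"
  have two_steps: "?R\<^sup>*\<^sup>* u w" if "?R u z" "?R z w" for u z w
    using that by (meson converse_rtranclp_into_rtranclp r_into_rtranclp)
  have "?R\<^sup>*\<^sup>* v w" if "w \<in> A <+> B" for w
    using assms(3) that ab
    by (elim PlusE) (auto simp: adj_in_def Kbip_E_def intro: two_steps[of _ "Inl a"] two_steps[of _ "Inr b"])
  then show ?thesis
    by (auto simp: component_def)
qed

lemma component_Kbip_E_one_side: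
  assumes "A = {} \<or> B = {}" "v \<in> A <+> B"
  shows "component Kbip_E (A <+> B) v = {v}"
proof -
  have "\<not> adj_in Kbip_E (A <+> B) u w" for u w
    using assms(1) by (auto simp: adj_in_def Kbip_E_def)
  then show ?thesis
    using assms(2) by (auto simp: component_def elim: rtranclp.cases)
qed

lemma has_odd_component_Kbip_E_Plus:
  assumes "finite A" "finite B" "A <+> B \<noteq> {}"
  shows "has_odd_component Kbip_E (A <+> B) \<longleftrightarrow> A = {} \<or> B = {} \<or> odd (card A + card B)"
proof -
  obtain v where v: "v \<in> A <+> B"
    using assms(3) by blast
  show ?thesis
  proof (cases "A = {} \<or> B = {}")
    case True
    then show ?thesis
      using component_Kbip_E_one_side v by (auto simp: has_odd_component_def)
  next
    case False
    then show ?thesis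
      using component_Kbip_E_Plus v assms(1,2) by (auto simp: has_odd_component_def card_Plus)
  qed
qed

lemma sum_sa_psubset_Plus:
  assumes "finite A" "finite B"
    and sa_sub: "\<And>W. W \<subset> A <+> B \<Longrightarrow> sa Kbip_E W = sa_bip (card (Inl -` W)) (card (Inr -` W))"
  shows "(\<Sum>W | W \<subset> A <+> B. sa Kbip_E W) =
    (\<Sum>(i, j)\<in>{..card A} \<times> {..card B}. int (card A choose i) * int (card B choose j) * sa_bip i j) -
    sa_bip (card A) (card B)"
proof -
  have "(\<Sum>W | W \<subset> A <+> B. sa Kbip_E W) =
      (\<Sum>W\<in>Pow (A <+> B) - {A <+> B}. sa_bip (card (Inl -` W)) (card (Inr -` W)))"
    by (intro sum.cong sa_sub) auto
  also have "\<dots> =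
      (\<Sum>W\<in>Pow (A <+> B). sa_bip (card (Inl -` W)) (card (Inr -` W))) - sa_bip (card A) (card B)"
    using assms(1,2) by (subst sum_diff1) auto
  finally show ?thesis
    using assms(1,2) by (simp add: sum_Pow_Plus_card)
qed

lemma sa_Kbip_E_Plus:
  "finite A \<Longrightarrow> finite B \<Longrightarrow> sa Kbip_E (A <+> B) = sa_bip (card A) (card B)"
proof (induction "card A + card B" arbitrary: A B rule: less_induct)
  case less
  consider (empty) "A = {}" "B = {}"
    | (odd) "A <+> B \<noteq> {}" "A = {} \<or> B = {} \<or> odd (card A + card B)"
    | (even) "A \<noteq> {}" "B \<noteq> {}" "even (card A + card B)"
    by auto
  then show ?case
  proof cases
    case empty
    then show ?thesis
      by (simp add: sa.simps)
  next
    case odd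
    have "has_odd_component Kbip_E (A <+> B)"
      using odd has_odd_component_Kbip_E_Plus[OF less.prems] by blast
    moreover have "sa_bip (card A) (card B) = 0"
      using odd less.prems by (intro sa_bip_eq_0) auto
    ultimately show ?thesis
      using odd(1) less.prems by (subst sa.simps) simp
  next
    case even
    have "sa Kbip_E W = sa_bip (card (Inl -` W)) (card (Inr -` W))" if "W \<subset> A <+> B" for W
    proof -
      have W: "W = Inl -` W <+> Inr -` W"
        by (simp add: Plus_vimage_Inl_Inr)
      then have "Inl -` W \<subseteq> A" "Inr -` W \<subseteq> B"
        using that Plus_subset_Plus_iff by blast+
      then have fin: "finite (Inl -` W)" "finite (Inr -` W)"
        using less.prems finite_subset by blast+
      have "card W < card (A <+> B)"
        using that less.prems by (simp add: psubset_card_mono)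
      then have "card (Inl -` W) + card (Inr -` W) < card A + card B"
        by (subst (asm) W) (simp add: card_Plus fin less.prems)
      from less.hyps[OF this fin] show ?thesis
        using W by simp
    qed
    from sum_sa_psubset_Plus[OF less.prems this]
    have "(\<Sum>W | W \<subset> A <+> B. sa Kbip_E W) = - sa_bip (card A) (card B)"
      using even less.prems by (simp add: sum_binomial_sa_bip)
    then show ?thesis
      using even less.prems has_odd_component_Kbip_E_Plus[OF less.prems]
      by (subst sa.simps) simp
  qed
qed

section \<open>Exponential generating functions in two variables\<close>

lemma has_sum_product_real:
  fixes u :: "'a \<Rightarrow> real" and v :: "'b \<Rightarrow> real"
  assumes u: "(u has_sum U) A" and v: "(v has_sum V) B"
  shows "((\<lambda>(a, b). u a * v b) has_sum U * V) (A \<times> B)"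
proof (rule has_sum_SigmaI)
  have abs_u: "(\<lambda>a. \<bar>u a\<bar>) summable_on A"
    using has_sum_imp_summable[OF u] summable_on_iff_abs_summable_on_real by auto
  have abs_v: "(\<lambda>b. \<bar>v b\<bar>) summable_on B"
    using has_sum_imp_summable[OF v] summable_on_iff_abs_summable_on_real by auto
  show "((\<lambda>b. case (a, b) of (a, b) \<Rightarrow> u a * v b) has_sum u a * V) B" for a
    using has_sum_cmult_right[OF v] by simp
  show "((\<lambda>a. u a * V) has_sum U * V) A"
    using has_sum_cmult_left[OF u] .
  have "(\<lambda>a. \<bar>u a\<bar> * infsum (\<lambda>b. \<bar>v b\<bar>) B) summable_on A"
    using summable_on_cmult_left[OF abs_u] by simp
  then have "(\<lambda>p. norm (case p of (a, b) \<Rightarrow> u a * v b)) summable_on A \<times> B"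
    using abs_v by (intro Infinite_Sum.abs_summable_on_Sigma_iff[THEN iffD2])
      (auto simp: abs_mult infsum_cmult_right summable_on_cmult_right infsum_nonneg)
  then show "(\<lambda>(a, b). u a * v b) summable_on A \<times> B"
    using summable_on_iff_abs_summable_on_real by blast
qed

lemma has_sum_exp_series:
  fixes z :: real
  shows "((\<lambda>n. z ^ n / fact n) has_sum exp z) UNIV"
proof (rule norm_summable_imp_has_sum)
  show "summable (\<lambda>n. norm (z ^ n / fact n))"
    using summable_exp[of "\<bar>z\<bar>"] by (simp add: power_abs abs_mult divide_inverse mult.commute)
  show "(\<lambda>n. z ^ n / fact n) sums exp z"
    using exp_converges[of z] by (simp add: divide_inverse mult.commute)
qed

definition egf_term :: "real \<Rightarrow> real \<Rightarrow> (nat \<Rightarrow> nat \<Rightarrow> real) \<Rightarrow> nat \<times> nat \<Rightarrow> real" where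
  "egf_term x y f = (\<lambda>(m, n). f m n * x ^ m / fact m * y ^ n / fact n)"

definition binom_conv :: "(nat \<Rightarrow> nat \<Rightarrow> 'a::comm_semiring_1) \<Rightarrow> (nat \<Rightarrow> nat \<Rightarrow> 'a) \<Rightarrow> nat \<Rightarrow> nat \<Rightarrow> 'a" where
  "binom_conv f g m n =
    (\<Sum>(i, j)\<in>{..m} \<times> {..n}. of_nat (m choose i) * of_nat (n choose j) * f i j * g (m - i) (n - j))"

lemma power_div_fact_mult:
  fixes x :: real
  assumes "i \<le> m"
  shows "x ^ i / fact i * (x ^ (m - i) / fact (m - i)) = of_nat (m choose i) * x ^ m / fact m"
proof -
  have "x ^ m = x ^ i * x ^ (m - i)"
    using assms by (simp flip: power_add)
  then show ?thesis
    by (simp add: binomial_fact[OF assms])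
qed

lemma egf_term_mult:
  assumes "i \<le> m" "j \<le> n"
  shows "egf_term x y f (i, j) * egf_term x y g (m - i, n - j) =
    egf_term x y (\<lambda>_ _. of_nat (m choose i) * of_nat (n choose j) * f i j * g (m - i) (n - j)) (m, n)"
proof -
  have "egf_term x y f (i, j) * egf_term x y g (m - i, n - j) = f i j * g (m - i) (n - j) *
      (x ^ i / fact i * (x ^ (m - i) / fact (m - i))) * (y ^ j / fact j * (y ^ (n - j) / fact (n - j)))"
    by (simp add: egf_term_def divide_inverse mult_ac)
  also have "\<dots> = f i j * g (m - i) (n - j) * (of_nat (m choose i) * x ^ m / fact m) *
      (of_nat (n choose j) * y ^ n / fact n)"
    by (simp only: power_div_fact_mult assms)
  finally show ?thesis
    by (simp add: egf_term_def divide_inverse mult_ac)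
qed

lemma has_sum_egf_binom_conv:
  assumes f: "(egf_term x y f has_sum F) UNIV" and g: "(egf_term x y g has_sum G) UNIV"
  shows "(egf_term x y (binom_conv f g) has_sum F * G) UNIV"
proof -
  define h where "h = (\<lambda>((m, n), (i, j)). egf_term x y f (i, j) * egf_term x y g (m - i, n - j))"
  have "((\<lambda>(p, q). egf_term x y f p * egf_term x y g q) has_sum F * G) (UNIV \<times> UNIV)"
    using has_sum_product_real[OF f g] .
  also have "?this \<longleftrightarrow> (h has_sum F * G) (SIGMA (m, n):UNIV. {..m} \<times> {..n})"
    by (rule has_sum_reindex_bij_witness[where j = "\<lambda>((i, j), (k, l)). ((i + k, j + l), (i, j))"
          and i = "\<lambda>((m, n), (i, j)). ((i, j), (m - i, n - j))"]) (auto simp: h_def)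
  finally have "((\<lambda>(m, n). \<Sum>ij\<in>{..m} \<times> {..n}. h ((m, n), ij)) has_sum F * G) UNIV"
    by (rule has_sum_Sigma') (auto simp: case_prod_unfold)
  moreover have "(\<Sum>ij\<in>{..m} \<times> {..n}. h ((m, n), ij)) = egf_term x y (binom_conv f g) (m, n)" for m n
  proof -
    have "(\<Sum>ij\<in>{..m} \<times> {..n}. h ((m, n), ij)) = (\<Sum>(i, j)\<in>{..m} \<times> {..n}.
        egf_term x y (\<lambda>_ _. of_nat (m choose i) * of_nat (n choose j) * f i j * g (m - i) (n - j)) (m, n))"
      by (intro sum.cong) (auto simp: h_def egf_term_mult)
    then show ?thesis
      by (simp add: egf_term_def binom_conv_def sum_divide_distrib sum_distrib_right case_prod_unfold)
  qed
  ultimately show ?thesis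
    by (simp add: case_prod_unfold)
qed

lemma has_sum_egf_add:
  "(egf_term x y f has_sum F) UNIV \<Longrightarrow> (egf_term x y g has_sum G) UNIV \<Longrightarrow>
    (egf_term x y (\<lambda>m n. f m n + g m n) has_sum F + G) UNIV"
  by (drule (1) has_sum_add) (simp add: egf_term_def case_prod_unfold add_divide_distrib distrib_right)

lemma has_sum_egf_cmult:
  "(egf_term x y f has_sum F) UNIV \<Longrightarrow> (egf_term x y (\<lambda>m n. c * f m n) has_sum c * F) UNIV"
  by (drule has_sum_cmult_right[of _ _ _ c]) (simp add: egf_term_def case_prod_unfold mult.assoc)

lemma has_sum_egf_power: "(egf_term x y (\<lambda>m n. a ^ m * b ^ n) has_sum exp (a * x) * exp (b * y)) UNIV"
proof -
  have "egf_term x y (\<lambda>m n. a ^ m * b ^ n) = (\<lambda>(m, n). (a * x) ^ m / fact m * ((b * y) ^ n / fact n))"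
    by (simp add: egf_term_def power_mult_distrib mult_ac)
  then show ?thesis
    using has_sum_product_real[OF has_sum_exp_series has_sum_exp_series] by simp
qed

definition cosh_add_coeff :: "nat \<Rightarrow> nat \<Rightarrow> real" where
  "cosh_add_coeff m n = (if even (m + n) then 1 else 0)"

definition cosh_plus_cosh_coeff :: "nat \<Rightarrow> nat \<Rightarrow> real" where
  "cosh_plus_cosh_coeff m n = (if even (m + n) \<and> (m = 0 \<or> n = 0) then 1 else 0)"

lemma has_sum_egf_cosh_add: "(egf_term x y cosh_add_coeff has_sum cosh (x + y)) UNIV"
proof -
  have coeff: "cosh_add_coeff = (\<lambda>m n. 1 / 2 * (1 ^ m * 1 ^ n) + 1 / 2 * ((- 1) ^ m * (- 1) ^ n))"
    by (auto simp: fun_eq_iff cosh_add_coeff_def simp flip: power_add)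
  have sum: "cosh (x + y) = 1 / 2 * (exp (1 * x) * exp (1 * y)) + 1 / 2 * (exp (- 1 * x) * exp (- 1 * y))"
    by (simp add: cosh_field_def flip: exp_add)
  show ?thesis
    unfolding coeff sum by (intro has_sum_egf_add has_sum_egf_cmult has_sum_egf_power)
qed

lemma has_sum_egf_cosh_plus_cosh: "(egf_term x y cosh_plus_cosh_coeff has_sum cosh x + cosh y - 1) UNIV"
proof -
  \<comment> \<open>\<open>0 ^ n\<close> is the indicator of \<open>n = 0\<close>\<close>
  have coeff: "cosh_plus_cosh_coeff = (\<lambda>m n. 1 / 2 * (1 ^ m * 0 ^ n) + 1 / 2 * ((- 1) ^ m * 0 ^ n) +
      1 / 2 * (0 ^ m * 1 ^ n) + 1 / 2 * (0 ^ m * (- 1) ^ n) + (- 1) * (0 ^ m * 0 ^ n))"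
    by (auto simp: fun_eq_iff cosh_plus_cosh_coeff_def power_0_left minus_one_power_iff)
  have sum: "cosh x + cosh y - 1 =
      1 / 2 * (exp (1 * x) * exp (0 * y)) + 1 / 2 * (exp (- 1 * x) * exp (0 * y)) +
      1 / 2 * (exp (0 * x) * exp (1 * y)) + 1 / 2 * (exp (0 * x) * exp (- 1 * y)) +
      (- 1) * (exp (0 * x) * exp (0 * y))"
    by (simp add: cosh_field_def add_divide_distrib)
  show ?thesis
    unfolding coeff sum by (intro has_sum_egf_add has_sum_egf_cmult has_sum_egf_power)
qed

lemma binom_conv_sa_bip_cosh_add:
  "binom_conv (\<lambda>i j. of_int (sa_bip i j)) cosh_add_coeff m n = cosh_plus_cosh_coeff m n"
proof -
  have "of_int (sa_bip i j) * cosh_add_coeff (m - i) (n - j) = of_int (sa_bip i j) * cosh_add_coeff m n"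
    if "i \<le> m" "j \<le> n" for i j
  proof (cases "even (i + j)")
    case True
    then have "even (m - i + (n - j)) \<longleftrightarrow> even (m + n)"
      using that by presburger
    then show ?thesis
      by (simp add: cosh_add_coeff_def)
  next
    case False
    then have "sa_bip i j = 0"
      by (intro sa_bip_eq_0) auto
    then show ?thesis
      by simp
  qed
  then have "binom_conv (\<lambda>i j. of_int (sa_bip i j)) cosh_add_coeff m n =
      cosh_add_coeff m n * of_int (\<Sum>(i, j)\<in>{..m} \<times> {..n}. int (m choose i) * int (n choose j) * sa_bip i j)"
    by (auto simp: binom_conv_def sum_distrib_left mult_ac intro!: sum.cong)
  also have "\<dots> = cosh_plus_cosh_coeff m n"
  proof (cases "even (m + n)")
    case True
    then show ?thesis
      by (simp only: sum_binomial_sa_bip[OF True]) (simp add: cosh_add_coeff_def cosh_plus_cosh_coeff_def)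
  qed (simp add: cosh_add_coeff_def cosh_plus_cosh_coeff_def)
  finally show ?thesis .
qed

section \<open>Convergence\<close>

lemma binomial_mult_fact_le: "k \<le> n \<Longrightarrow> (n choose k) * fact k \<le> (fact n :: nat)"
proof -
  assume "k \<le> n"
  have "(n choose k) * fact k * 1 \<le> (n choose k) * fact k * fact (n - k)"
    by (intro mult_le_mono2) simp
  also have "\<dots> = fact n"
    using binomial_fact_lemma[OF \<open>k \<le> n\<close>] by (simp add: mult_ac)
  finally show ?thesis
    by simp
qed

lemma sum_power4_rectangle_le: "(\<Sum>(i, j)\<in>{..a} \<times> {..b} - {(a, b)}. 4 ^ (i + j) :: int) \<le> 4 ^ (a + b)"
proof -
  have geometric: "3 * (\<Sum>i\<le>k. 4 ^ i) \<le> (4 ^ Suc k :: int)" for k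
    by (induction k) auto
  have "9 * (\<Sum>(i, j)\<in>{..a} \<times> {..b}. 4 ^ (i + j) :: int) = (3 * (\<Sum>i\<le>a. 4 ^ i)) * (3 * (\<Sum>j\<le>b. 4 ^ j))"
    by (simp add: sum_product sum.cartesian_product power_add)
  also have "\<dots> \<le> 4 ^ Suc a * 4 ^ Suc b"
    by (intro mult_mono geometric) (auto intro: sum_nonneg)
  also have "\<dots> = 16 * 4 ^ (a + b)"
    by (simp add: power_add)
  finally have "(\<Sum>(i, j)\<in>{..a} \<times> {..b}. 4 ^ (i + j) :: int) \<le> 2 * 4 ^ (a + b)"
    using zero_le_power[of "4 :: int" "a + b"] by linarith
  then show ?thesis
    by (subst sum_diff1) auto
qed

lemma abs_sa_bip_le: "\<bar>sa_bip a b\<bar> \<le> 4 ^ (a + b) * fact a * fact b"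
proof (induction "a + b" arbitrary: a b rule: less_induct)
  case less
  show ?case
  proof (cases "a = 0 \<or> b = 0 \<or> odd (a + b)")
    case True
    then show ?thesis
      by (cases "a = 0 \<and> b = 0") (simp_all add: sa_bip_eq_0)
  next
    case False
    let ?R = "{..a} \<times> {..b} - {(a, b)}"
    have term_le: "int (a choose i) * int (b choose j) * \<bar>sa_bip i j\<bar> \<le> fact a * fact b * 4 ^ (i + j)"
      if "(i, j) \<in> ?R" for i j
    proof -
      have "i + j < a + b" "i \<le> a" "j \<le> b"
        using that by auto
      then have "int (a choose i) * int (b choose j) * \<bar>sa_bip i j\<bar> \<le>
          int (a choose i) * int (b choose j) * (4 ^ (i + j) * fact i * fact j)"
        using less.hyps[of i j] by (intro mult_left_mono) auto
      also have "\<dots> = int ((a choose i) * fact i) * int ((b choose j) * fact j) * 4 ^ (i + j)"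
        by (simp add: of_nat_fact mult_ac)
      also have "\<dots> \<le> int (fact a) * int (fact b) * 4 ^ (i + j)"
        using \<open>i \<le> a\<close> \<open>j \<le> b\<close> by (intro mult_mono binomial_mult_fact_le of_nat_mono) auto
      finally show ?thesis
        by (simp add: of_nat_fact)
    qed
    have "\<bar>sa_bip a b\<bar> = \<bar>\<Sum>(i, j)\<in>?R. int (a choose i) * int (b choose j) * sa_bip i j\<bar>"
      using False by (subst sa_bip.simps) simp
    also have "\<dots> \<le> (\<Sum>(i, j)\<in>?R. int (a choose i) * int (b choose j) * \<bar>sa_bip i j\<bar>)"
      using sum_abs[of "\<lambda>(i, j). int (a choose i) * int (b choose j) * sa_bip i j" ?R]
      by (simp add: case_prod_unfold abs_mult)
    also have "\<dots> \<le> fact a * fact b * (\<Sum>(i, j)\<in>?R. 4 ^ (i + j))"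
      unfolding sum_distrib_left by (intro sum_mono) (use term_le in fastforce)
    also have "(\<Sum>(i, j)\<in>?R. 4 ^ (i + j)) \<le> (4 :: int) ^ (a + b)"
      by (rule sum_power4_rectangle_le)
    finally show ?thesis
      by (simp add: mult_ac)
  qed
qed

lemma summable_egf_sa_bip:
  assumes "\<bar>x\<bar> < 1 / 8" "\<bar>y\<bar> < 1 / 8"
  shows "egf_term x y (\<lambda>m n. of_int (sa_bip m n)) summable_on UNIV"
proof -
  have half: "((\<lambda>n. (1 / 2) ^ n) has_sum (2 :: real)) UNIV"
    using geometric_sums[of "1 / 2 :: real"] by (intro sums_nonneg_imp_has_sum) auto
  have bound: "norm (egf_term x y (\<lambda>m n. of_int (sa_bip m n)) (m, n)) \<le> (1 / 2) ^ m * (1 / 2) ^ n"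
    for m n
  proof -
    have "real_of_int \<bar>sa_bip m n\<bar> \<le> real_of_int (4 ^ (m + n) * fact m * fact n)"
      by (simp only: of_int_le_iff abs_sa_bip_le)
    then have coeff_le: "\<bar>real_of_int (sa_bip m n)\<bar> \<le> 4 ^ (m + n) * fact m * fact n"
      by simp
    have "norm (egf_term x y (\<lambda>m n. of_int (sa_bip m n)) (m, n)) =
        \<bar>real_of_int (sa_bip m n)\<bar> * (\<bar>x\<bar> ^ m / fact m) * (\<bar>y\<bar> ^ n / fact n)"
      by (simp add: egf_term_def abs_mult power_abs)
    also have "\<dots> \<le> (4 ^ (m + n) * fact m * fact n) * (\<bar>x\<bar> ^ m / fact m) * (\<bar>y\<bar> ^ n / fact n)"
      using coeff_le by (intro mult_right_mono) auto
    also have "\<dots> = (4 * \<bar>x\<bar>) ^ m * (4 * \<bar>y\<bar>) ^ n"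
      by (simp add: power_add power_mult_distrib)
    also have "\<dots> \<le> (1 / 2) ^ m * (1 / 2) ^ n"
      using assms by (intro mult_mono power_mono) auto
    finally show ?thesis .
  qed
  have "(\<lambda>(m, n). (1 / 2) ^ m * (1 / 2) ^ n :: real) summable_on UNIV"
    using has_sum_imp_summable[OF has_sum_product_real[OF half half]] by simp
  then have "(\<lambda>p. norm (egf_term x y (\<lambda>m n. of_int (sa_bip m n)) p)) summable_on UNIV"
    by (rule Infinite_Sum.abs_summable_on_comparison_test') (use bound in auto)
  then show ?thesis
    using summable_on_iff_abs_summable_on_real by blast
qed

lemma has_sum_egf_sa_bip:
  assumes "\<bar>x\<bar> < 1 / 8" "\<bar>y\<bar> < 1 / 8"
  shows "(egf_term x y (\<lambda>m n. of_int (sa_bip m n)) has_sum (cosh x + cosh y - 1) / cosh (x + y)) UNIV"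
proof -
  obtain S where S: "(egf_term x y (\<lambda>m n. of_int (sa_bip m n)) has_sum S) UNIV"
    using summable_egf_sa_bip[OF assms] by (auto simp: summable_on_def)
  have "binom_conv (\<lambda>m n. of_int (sa_bip m n)) cosh_add_coeff = cosh_plus_cosh_coeff"
    by (intro ext binom_conv_sa_bip_cosh_add)
  then have "(egf_term x y cosh_plus_cosh_coeff has_sum S * cosh (x + y)) UNIV"
    using has_sum_egf_binom_conv[OF S has_sum_egf_cosh_add] by simp
  then have "S * cosh (x + y) = cosh x + cosh y - 1"
    using has_sum_egf_cosh_plus_cosh has_sum_unique by blast
  then have "S = (cosh x + cosh y - 1) / cosh (x + y)"
    using cosh_real_pos[of "x + y"] by (simp add: eq_divide_eq)
  then show ?thesis
    using S by simp
qed

section \<open>The signed a-polynomial\<close>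

lemma map_poly_of_int_sum:
  "map_poly (of_int :: int \<Rightarrow> 'a::ring_1) (\<Sum>i\<in>I. p i) = (\<Sum>i\<in>I. map_poly of_int (p i))"
  by (rule poly_eqI) (simp add: coeff_map_poly coeff_sum)

lemma Kbip_V_eq_Plus: "Kbip_V p q = {..<p} <+> {..<q}"
  by (simp add: Kbip_V_def Plus_def)

lemma poly_sa_poly_Kbip:
  fixes t :: "'a::comm_ring_1"
  shows "poly (map_poly of_int (sa_poly Kbip_E (Kbip_V p q))) t =
    binom_conv (\<lambda>i j. of_int (sa_bip i j)) (\<lambda>i j. t ^ i * t ^ j) p q"
proof -
  let ?V = "{..<p} <+> {..<q}"
  have term_eq: "of_int (sa Kbip_E W) * t ^ card (?V - W) =
      of_int (sa_bip (card (Inl -` W)) (card (Inr -` W))) *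
      (t ^ (p - card (Inl -` W)) * t ^ (q - card (Inr -` W)))"
    if "W \<subseteq> ?V" for W
  proof -
    have W: "W = Inl -` W <+> Inr -` W"
      by (simp add: Plus_vimage_Inl_Inr)
    have sub: "Inl -` W \<subseteq> {..<p}" "Inr -` W \<subseteq> {..<q}"
      using that by auto
    then have fin: "finite (Inl -` W)" "finite (Inr -` W)"
      by (auto intro: finite_subset)
    have "?V - W = ({..<p} - Inl -` W) <+> ({..<q} - Inr -` W)"
      by (subst (1) W) auto
    then have "card (?V - W) = (p - card (Inl -` W)) + (q - card (Inr -` W))"
      using sub by (simp add: card_Plus card_Diff_subset fin)
    then show ?thesis
      using sa_Kbip_E_Plus[OF fin] W by (simp add: power_add)
  qed
  have "poly (map_poly of_int (sa_poly Kbip_E (Kbip_V p q))) t =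
      (\<Sum>W\<in>Pow ?V. of_int (sa Kbip_E W) * t ^ card (?V - W))"
    by (simp add: sa_poly_def Kbip_V_eq_Plus map_poly_of_int_sum poly_sum map_poly_monom poly_monom)
  also have "\<dots> = (\<Sum>W\<in>Pow ?V. of_int (sa_bip (card (Inl -` W)) (card (Inr -` W))) *
      (t ^ (p - card (Inl -` W)) * t ^ (q - card (Inr -` W))))"
    by (intro sum.cong term_eq) auto
  also have "\<dots> = binom_conv (\<lambda>i j. of_int (sa_bip i j)) (\<lambda>i j. t ^ i * t ^ j) p q"
    using sum_Pow_Plus_card[of "{..<p}" "{..<q}" "\<lambda>i j. of_int (sa_bip i j) * (t ^ (p - i) * t ^ (q - j))"]
    by (simp add: binom_conv_def mult_ac)
  finally show ?thesis .
qed

theorem mainTheorem8: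
  fixes t :: real
  shows "\<exists>\<epsilon>>0. \<forall>x y :: real. \<bar>x\<bar> < \<epsilon> \<and> \<bar>y\<bar> < \<epsilon> \<longrightarrow>
    ((\<lambda>(p, q). poly (map_poly of_int (sa_poly Kbip_E (Kbip_V p q))) t * x ^ p / fact p * y ^ q / fact q)
      has_sum (exp (t * (x + y)) * (cosh x + cosh y - 1) / cosh (x + y))) UNIV"
proof (intro exI[of _ "1 / 8"] conjI allI impI)
  fix x y :: real
  assume "\<bar>x\<bar> < 1 / 8 \<and> \<bar>y\<bar> < 1 / 8"
  then have "(egf_term x y (binom_conv (\<lambda>i j. of_int (sa_bip i j)) (\<lambda>i j. t ^ i * t ^ j)) has_sum
      (cosh x + cosh y - 1) / cosh (x + y) * (exp (t * x) * exp (t * y))) UNIV"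
    by (intro has_sum_egf_binom_conv has_sum_egf_sa_bip has_sum_egf_power) auto
  then show "((\<lambda>(p, q). poly (map_poly of_int (sa_poly Kbip_E (Kbip_V p q))) t *
      x ^ p / fact p * y ^ q / fact q) has_sum (exp (t * (x + y)) * (cosh x + cosh y - 1) / cosh (x + y))) UNIV"
    by (simp add: egf_term_def poly_sa_poly_Kbip exp_add distrib_left mult_ac)
qed simp

end
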